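(* With $c_*=\frac2{\sqrt3}$, $h_1(c_* )<\pi$.
   Context: Let $K(R)=\frac{\exp(\frac{R^2-1}{2})}{R}$ for $R>0$ (strictly decreasing on $(0,1]$, $K(1)=1$). For $s\ge1$ let $R^-(s)\in(0,1]$ be the solution of $K(R)=s$ in $(0,1]$. For $c\ge c_*$, $h_1(c)=\int_{\pi/3}^{2\pi/3}\frac{d\psi}{1-[R^-(c\sin\psi)]^2}$. *)

theory Defs
  imports "HOL-Analysis.Analysis"
begin

definition K :: "real \<Rightarrow> real" where
  "K R = exp ((R^2 - 1) / 2) / R"

definition Rminus :: "real \<Rightarrow> real" where
  "Rminus s = (THE R. R \<in> {0<..1} \<and> K R = s)"

definition c_star :: real where
  "c_star = 2 / sqrt 3"

definition h1_integrand :: "real \<Rightarrow> real \<Rightarrow> real" where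
  "h1_integrand c \<psi> = 1 / (1 - (Rminus (c * sin \<psi>))^2)"

definition h1 :: "real \<Rightarrow> real" where
  "h1 c = integral {pi/3..2*pi/3} (h1_integrand c)"

end

theory Submission
  imports Defs
begin

text \<open>
  For \<open>\<psi> \<in> (\<pi>/3, 2\<pi>/3)\<close> put \<open>s = c\<^sub>* sin \<psi> \<in> (1, 5/4]\<close> and \<open>R = R\<^sup>-(s) \<in> [1/4, 1)\<close>.
  The inequality \<open>ln u \<ge> (u - 1/u)/2\<close> for \<open>u = R\<^sup>2 \<le> 1\<close> gives
  \<open>ln s = ln K(R) \<le> (1 - R\<^sup>2)\<^sup>2 / (4R\<^sup>2)\<close>, a quadratic inequality for \<open>1/(1 - R\<^sup>2)\<close>
  which yields \<open>1/(1 - R\<^sup>2) \<le> 5/8 + 1/(2\<surd>(ln s))\<close>. On the other hand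
  \<open>s = cos t / cos(\<pi>/6)\<close> with \<open>t = \<psi> - \<pi>/2\<close>, and since \<open>ln cos t + t\<^sup>2/2\<close> decreases on
  \<open>[0, \<pi>/2)\<close>, \<open>ln s \<ge> ((\<pi>/6)\<^sup>2 - t\<^sup>2)/2\<close>. Hence the integrand, which blows up at both
  endpoints, is dominated by \<open>5/8 + 1/\<surd>(2((\<pi>/6)\<^sup>2 - t\<^sup>2))\<close>, an arcsine derivative with
  integral \<open>5\<pi>/24 + \<pi>/\<surd>2 < \<pi>\<close>; the domination also gives integrability.
\<close>

lemma K_eq_exp: "0 < R \<Longrightarrow> K R = exp ((R^2 - 1) / 2 - ln R)"
  by (simp add: K_def exp_diff)

lemma K_one [simp]: "K 1 = 1"
  by (simp add: K_def)

lemma K_strict_decreasing: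
  assumes "0 < a" "a < b" "b \<le> 1"
  shows "K b < K a"
proof -
  let ?\<phi> = "\<lambda>R::real. (R^2 - 1) / 2 - ln R"
  have "?\<phi> b < ?\<phi> a"
  proof (rule DERIV_neg_imp_decreasing_open[OF \<open>a < b\<close>])
    fix x assume "a < x" "x < b"
    with assms have "0 < x" "x < 1" by auto
    then have "DERIV ?\<phi> x :> x - 1 / x"
      by (auto intro!: derivative_eq_intros simp: field_simps power2_eq_square)
    moreover from \<open>0 < x\<close> \<open>x < 1\<close> have "x - 1 / x < 0"
      by (simp add: field_simps mult_strict_mono[of x 1 x 1, simplified])
    ultimately show "\<exists>y. DERIV ?\<phi> x :> y \<and> y < 0" by blast
  next
    show "continuous_on {a..b} ?\<phi>"
      using assms by (intro continuous_intros) auto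
  qed
  with assms show ?thesis by (simp add: K_eq_exp)
qed

lemma continuous_on_K: "continuous_on {0<..} K"
  unfolding K_def by (intro continuous_intros) auto

lemma inj_on_K: "inj_on K {0<..1}"
proof (rule inj_onI, rule ccontr)
  fix x y assume "x \<in> {0<..1}" "y \<in> {0<..1}" "K x = K y" "x \<noteq> y"
  then show False
    by (cases "x < y") (auto dest: K_strict_decreasing[of x y] K_strict_decreasing[of y x])
qed

lemma Rminus_K:
  assumes "R \<in> {0<..1}"
  shows "Rminus (K R) = R"
  unfolding Rminus_def
proof (rule the_equality)
  show "R \<in> {0<..1} \<and> K R = K R" using assms by simp
  show "R' = R" if "R' \<in> {0<..1} \<and> K R' = K R" for R'
    using that assms inj_on_K by (auto dest: inj_onD)
qed

lemma Rminus_in_range: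
  assumes "0 < a" "a \<le> 1" "1 \<le> s" "s \<le> K a"
  shows "Rminus s \<in> {a..1}" and "K (Rminus s) = s"
proof -
  have "continuous_on {a..1} K"
    using assms by (intro continuous_on_subset[OF continuous_on_K]) auto
  then obtain R where R: "a \<le> R" "R \<le> 1" "K R = s"
    using IVT2'[of K 1 s a] assms by auto
  with assms Rminus_K[of R] have "Rminus s = R" by auto
  with R show "Rminus s \<in> {a..1}" "K (Rminus s) = s" by auto
qed

lemma continuous_on_Rminus:
  assumes "0 < a" "a \<le> 1"
  shows "continuous_on {1..K a} Rminus"
proof (rule continuous_on_subset)
  have "continuous_on {a..1} K"
    using assms by (intro continuous_on_subset[OF continuous_on_K]) auto
  then show "continuous_on (K ` {a..1}) Rminus"
    using assms by (intro continuous_on_inv) (auto intro: Rminus_K)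
  show "{1..K a} \<subseteq> K ` {a..1}"
    using Rminus_in_range[OF assms] by (metis atLeastAtMost_iff image_eqI subsetI)
qed

lemma K_quarter_ge: "5/4 \<le> K (1/4)"
proof -
  have "1 + (-15/32) \<le> exp (-15/32::real)" by (rule exp_ge_add_one_self)
  then show ?thesis by (simp add: K_def power2_eq_square)
qed

lemma Rminus_bounds:
  assumes "1 < s" "s \<le> 5/4"
  shows "1/4 \<le> Rminus s" "Rminus s < 1" "K (Rminus s) = s"
proof -
  have "1 \<le> s" "s \<le> K (1/4)" using assms K_quarter_ge by auto
  from Rminus_in_range[of "1/4", OF _ _ this] have "Rminus s \<in> {1/4..1}" "K (Rminus s) = s"
    by auto
  moreover from this assms have "Rminus s \<noteq> 1" by auto
  ultimately show "1/4 \<le> Rminus s" "Rminus s < 1" "K (Rminus s) = s" by auto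
qed

lemma ln_ge_half_diff_inverse:
  fixes u :: real
  assumes "0 < u" "u \<le> 1"
  shows "(u - 1/u) / 2 \<le> ln u"
proof -
  let ?h = "\<lambda>x::real. ln x - (x - 1/x) / 2"
  have "?h 1 \<le> ?h u"
  proof (rule DERIV_nonpos_imp_nonincreasing[OF \<open>u \<le> 1\<close>])
    fix x assume "u \<le> x" "x \<le> 1"
    with assms have "0 < x" by linarith
    then have "DERIV ?h x :> - ((x - 1)^2 / (2 * x^2))"
      by (auto intro!: derivative_eq_intros simp: field_simps power2_eq_square)
    then show "\<exists>y. DERIV ?h x :> y \<and> y \<le> 0" by force
  qed
  then show ?thesis by simp
qed

lemma ln_K_le:
  assumes "0 < R" "R \<le> 1"
  shows "ln (K R) \<le> (1 - R^2)^2 / (4 * R^2)"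
proof -
  define u where "u = R^2"
  have u: "0 < u" "u \<le> 1" using assms by (auto simp: u_def power_le_one)
  have "ln (K R) = (u - 1) / 2 - ln u / 2"
    using assms by (simp add: K_eq_exp u_def ln_realpow)
  also have "\<dots> \<le> (u - 1) / 2 - (u - 1/u) / 4"
    using ln_ge_half_diff_inverse[OF u] by simp
  also have "\<dots> = (1 - u)^2 / (4 * u)"
    using u by (simp add: field_simps power2_eq_square)
  finally show ?thesis by (simp add: u_def)
qed

lemma le_of_sq_sub_le:
  fixes y X :: real
  assumes "y^2 - y \<le> X" "1 \<le> X"
  shows "y \<le> 5/8 + sqrt X"
proof (rule ccontr)
  define m where "m = 5/8 + sqrt X"
  assume "\<not> y \<le> 5/8 + sqrt X"
  moreover have "1 \<le> sqrt X" using assms by simp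
  ultimately have "0 < (y - m) * (y + m - 1)" unfolding m_def by (intro mult_pos_pos) linarith+
  then have "m^2 - m < y^2 - y" by (simp add: power2_eq_square algebra_simps)
  moreover have "m^2 - m = X + sqrt X / 4 - 15/64"
    using assms by (simp add: m_def power2_eq_square algebra_simps)
  ultimately show False using assms \<open>1 \<le> sqrt X\<close> by linarith
qed

lemma inverse_one_minus_Rminus_sq_le:
  assumes "1 < s" "s \<le> 5/4"
  shows "1 / (1 - (Rminus s)^2) \<le> 5/8 + 1 / (2 * sqrt (ln s))"
proof -
  define R where "R = Rminus s"
  define v where "v = 1 - R^2"
  have R: "0 < R" "R < 1" "K R = s" using Rminus_bounds[OF assms] by (auto simp: R_def)
  then have v: "0 < v" "v < 1" by (auto simp: v_def power_less_one_iff)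
  have "ln s \<le> v^2 / (4 * (1 - v))"
    using ln_K_le[of R] R by (simp add: v_def)
  with assms v have "(1/v)^2 - 1/v \<le> 1 / (4 * ln s)"
    by (simp add: field_simps power2_eq_square)
  moreover have "ln s \<le> 1/4"
    using ln_le_minus_one[of s] assms by simp
  with assms have "1 \<le> 1 / (4 * ln s)" by (simp add: field_simps)
  ultimately have "1/v \<le> 5/8 + sqrt (1 / (4 * ln s))"
    by (rule le_of_sq_sub_le)
  then show ?thesis
    by (simp add: R_def v_def real_sqrt_divide real_sqrt_mult)
qed

lemma ln_cos_ge:
  assumes "\<bar>t\<bar> \<le> a" "a < pi/2"
  shows "(a^2 - t^2) / 2 \<le> ln (cos t) - ln (cos a)"
proof -
  let ?p = "\<lambda>x::real. ln (cos x) + x^2 / 2"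
  have "?p a \<le> ?p \<bar>t\<bar>"
  proof (rule DERIV_nonpos_imp_nonincreasing[OF \<open>\<bar>t\<bar> \<le> a\<close>])
    fix x assume "\<bar>t\<bar> \<le> x" "x \<le> a"
    with assms have x: "0 \<le> x" "x < pi/2" by linarith+
    then have "cos x > 0" by (intro cos_gt_zero_pi) auto
    then have "DERIV ?p x :> x - tan x"
      by (auto intro!: derivative_eq_intros simp: tan_def field_simps power2_eq_square)
    moreover have "x \<le> tan x"
      using abs_tan_ge[of x] tan_pos_pi2_le[of x] x by simp
    ultimately show "\<exists>y. DERIV ?p x :> y \<and> y \<le> 0" by force
  qed
  then show ?thesis by simp
qed

lemma c_star_mult_sin: "c_star * sin x = cos (x - pi/2) / cos (pi/6)"
  by (simp add: c_star_def cos_30 cos_diff)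

lemma c_star_mult_sin_bounds:
  assumes "x \<in> {pi/3<..<2*pi/3}"
  shows "1 < c_star * sin x" "c_star * sin x \<le> 5/4"
    and "((pi/6)^2 - (x - pi/2)^2) / 2 \<le> ln (c_star * sin x)"
proof -
  define t where "t = x - pi/2"
  have t: "\<bar>t\<bar> < pi/6" using assms unfolding t_def abs_less_iff by auto
  have cos_pos: "0 < cos (pi/6)" by (simp add: cos_30)
  have "cos (pi/6) < cos \<bar>t\<bar>"
    using t by (intro cos_monotone_0_pi) auto
  with cos_pos show "1 < c_star * sin x"
    by (simp add: c_star_mult_sin t_def)
  have "8/5 \<le> sqrt 3" by (rule real_le_rsqrt) (simp add: power2_eq_square)
  then have "c_star \<le> 5/4" by (simp add: c_star_def field_simps)
  moreover have "c_star * sin x \<le> c_star"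
    using mult_left_mono[of "sin x" 1 c_star] by (simp add: c_star_def)
  ultimately show "c_star * sin x \<le> 5/4" by linarith
  have "0 < cos t" using \<open>cos (pi/6) < cos \<bar>t\<bar>\<close> cos_pos by simp
  with cos_pos have "ln (c_star * sin x) = ln (cos t) - ln (cos (pi/6))"
    by (simp add: c_star_mult_sin t_def ln_div)
  with ln_cos_ge[of t "pi/6"] t show "((pi/6)^2 - (x - pi/2)^2) / 2 \<le> ln (c_star * sin x)"
    by (simp add: t_def)
qed

definition h1_majorant :: "real \<Rightarrow> real" where
  "h1_majorant x = 5/8 + 1 / sqrt (2 * ((pi/6)^2 - (x - pi/2)^2))"

lemma h1_integrand_c_star_bounds:
  assumes "x \<in> {pi/3<..<2*pi/3}"
  shows "0 \<le> h1_integrand c_star x" "h1_integrand c_star x \<le> h1_majorant x"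
proof -
  let ?s = "c_star * sin x"
  let ?a = "(pi/6)^2 - (x - pi/2)^2"
  note s = c_star_mult_sin_bounds[OF assms]
  have "0 < Rminus ?s" "Rminus ?s < 1" using Rminus_bounds[OF s(1,2)] by auto
  then show "0 \<le> h1_integrand c_star x"
    by (simp add: h1_integrand_def power_le_one)
  have "\<bar>x - pi/2\<bar> < pi/6" using assms unfolding abs_less_iff by auto
  then have "0 < ?a" using power_strict_mono[of "\<bar>x - pi/2\<bar>" "pi/6" 2] by simp
  have "h1_integrand c_star x \<le> 5/8 + 1 / (2 * sqrt (ln ?s))"
    unfolding h1_integrand_def by (rule inverse_one_minus_Rminus_sq_le[OF s(1,2)])
  also have "\<dots> \<le> 5/8 + 1 / (2 * sqrt (?a / 2))"
    using \<open>0 < ?a\<close> s(3) by (intro add_left_mono divide_left_mono mult_left_mono real_sqrt_le_mono) auto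
  also have "2 * sqrt (b / 2) = sqrt (2 * b)" for b :: real
    using real_sqrt_mult[of 4 "b / 2"] by simp
  finally show "h1_integrand c_star x \<le> h1_majorant x"
    by (simp add: h1_majorant_def)
qed

lemma h1_majorant_has_integral:
  "(h1_majorant has_integral (5*pi/24 + pi / sqrt 2)) {pi/3..2*pi/3}"
proof -
  define w where "w x = (x - pi/2) / (pi/6)" for x
  define F where "F x = 5/8 * x + arcsin (w x) / sqrt 2" for x
  have "(h1_majorant has_integral (F (2*pi/3) - F (pi/3))) {pi/3..2*pi/3}"
  proof (rule fundamental_theorem_of_calculus_interior)
    show "continuous_on {pi/3..2*pi/3} F"
      unfolding F_def w_def by (intro continuous_intros) (auto simp: field_simps)
  next
    fix x assume "x \<in> {pi/3<..<2*pi/3}"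
    then have w: "-1 < w x" "w x < 1" by (auto simp: w_def field_simps)
    have F': "DERIV F x :> 5/8 + inverse (sqrt (1 - (w x)^2)) * (6/pi) / sqrt 2"
      unfolding F_def w_def using w[unfolded w_def]
      by (auto intro!: derivative_eq_intros simp: field_simps)
    have "2 * ((pi/6)^2 - (x - pi/2)^2) = (sqrt 2 * (pi/6))^2 * (1 - (w x)^2)"
      by (simp add: w_def field_simps power2_eq_square)
    then have "h1_majorant x = 5/8 + 1 / (sqrt 2 * (pi/6) * sqrt (1 - (w x)^2))"
      by (simp add: h1_majorant_def real_sqrt_mult)
    also have "\<dots> = 5/8 + inverse (sqrt (1 - (w x)^2)) * (6/pi) / sqrt 2"
      using w by (simp add: abs_square_less_1 field_simps)
    finally show "(F has_vector_derivative h1_majorant x) (at x)"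
      using F' by (simp add: has_real_derivative_iff_has_vector_derivative[symmetric])
  qed simp
  moreover have "F (2*pi/3) - F (pi/3) = 5*pi/24 + pi / sqrt 2"
    by (simp add: F_def w_def field_simps)
  ultimately show ?thesis by simp
qed

lemma continuous_on_h1_integrand_c_star:
  "continuous_on {pi/3<..<2*pi/3} (h1_integrand c_star)"
proof -
  have "continuous_on {pi/3<..<2*pi/3} (\<lambda>x. Rminus (c_star * sin x))"
  proof (rule continuous_on_compose2[OF continuous_on_Rminus[of "1/4"]])
    show "(\<lambda>x. c_star * sin x) ` {pi/3<..<2*pi/3} \<subseteq> {1..K (1/4)}"
      using c_star_mult_sin_bounds K_quarter_ge by fastforce
  qed (auto intro!: continuous_intros)
  moreover have "1 - (Rminus (c_star * sin x))^2 \<noteq> 0" if "x \<in> {pi/3<..<2*pi/3}" for x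
    using Rminus_bounds[OF c_star_mult_sin_bounds(1,2)[OF that]] by (auto simp: abs_square_eq_1)
  ultimately show ?thesis
    unfolding h1_integrand_def[abs_def] by (intro continuous_intros) blast+
qed

theorem mainTheorem11:
  shows "h1_integrand c_star integrable_on {pi/3..2*pi/3} \<and> h1 c_star < pi"
proof -
  let ?I = "{pi/3<..<2*pi/3}"
  have g: "h1_majorant integrable_on ?I"
    using h1_majorant_has_integral integrable_on_open_interval_real by blast
  have "h1_integrand c_star \<in> borel_measurable (lebesgue_on ?I)"
    by (rule continuous_imp_measurable_on_sets_lebesgue[OF continuous_on_h1_integrand_c_star]) simp
  then have f: "h1_integrand c_star integrable_on ?I"
    by (rule measurable_bounded_by_integrable_imp_integrable[OF _ g])
       (auto simp: h1_integrand_c_star_bounds)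
  have "h1 c_star = integral ?I (h1_integrand c_star)"
    unfolding h1_def by (rule integral_open_interval_real)
  also have "\<dots> \<le> integral ?I h1_majorant"
    using f g by (rule integral_le) (simp add: h1_integrand_c_star_bounds)
  also have "\<dots> = 5*pi/24 + pi / sqrt 2"
    by (metis h1_majorant_has_integral integral_open_interval_real integral_unique)
  also have "\<dots> < pi"
  proof -
    have "24/19 < sqrt 2" by (rule real_less_rsqrt) (simp add: power2_eq_square)
    then show ?thesis by (simp add: field_simps)
  qed
  finally show ?thesis
    using f integrable_on_open_interval_real by blast
qed

end
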